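(* Let $k$ be a positive-definite kernel on $\mathcal X$ and $l$ a positive-definite kernel on $\mathcal Y$ with $\sup_xk(x,x)\le\nu_k$ and $\sup_yl(y,y)\le\nu_l$. Then $|\mathbb E\hat\sigma^2-\sigma^2|\le\frac{4608\nu_k^2\nu_l^2}{n}$.
   Context: $(X_1,Y_1),\dots,(X_n,Y_n)$, $n\ge4$, i.i.d. from $P_{xy}$. $K_{ab}=k(X_a,X_b)$, $L_{ab}=l(Y_a,Y_b)$, and for distinct indices $H_{ijqr}=\frac1{24}\sum_{(a,b,c,d)}K_{ab}(L_{ab}+L_{cd}-2L_{ac})$ over all $24$ orderings of $\{i,j,q,r\}$. With $(n)_k=n!/(n-k)!$, $\mathbf i^n_k$ the $k$-tuples of distinct elements of $\{1,\dots,n\}$, $\mathbf i^n_3\setminus\{i\}$ those avoiding $i$: $\hat\eta=\frac1{(n)_4}\sum_{\mathbf i^n_4}H_{ijqr}$, $\eta=\mathbb E[H_{1234}]$, $\sigma^2=16(\mathbb E[H_{1234}H_{1567}]-\eta^2)$ (indices referring to i.i.d. samples), and $\hat\sigma^2=16\Bigl(\frac1{(n)_4(n-1)_3}\sum_{(i,j,q,r)\in\mathbf i^n_4}\sum_{(b,c,d)\in\mathbf i^n_3\setminus\{i\}}H_{ijqr}H_{ibcd}-\hat\eta^2\Bigr)$. *)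

theory Defs
  imports "HOL-Probability.Probability" "HOL-Combinatorics.Multiset_Permutations"
begin

definition pd_kernel :: "('a \<Rightarrow> 'a \<Rightarrow> real) \<Rightarrow> bool" where
  "pd_kernel k \<longleftrightarrow> (\<forall>x y. k x y = k y x) \<and>
     (\<forall>(xs :: 'a list) (c :: nat \<Rightarrow> real).
        (\<Sum>i<length xs. \<Sum>j<length xs. c i * c j * k (xs ! i) (xs ! j)) \<ge> 0)"

definition falling :: "nat \<Rightarrow> nat \<Rightarrow> real" where
  "falling n k = fact n / fact (n - k)"

definition tuples :: "nat \<Rightarrow> nat \<Rightarrow> nat list set" where
  "tuples n k = {xs. length xs = k \<and> distinct xs \<and> set xs \<subseteq> {1..n}}"

definition hterm :: "('x \<Rightarrow> 'x \<Rightarrow> real) \<Rightarrow> ('y \<Rightarrow> 'y \<Rightarrow> real) \<Rightarrow> (nat \<Rightarrow> 'x \<times> 'y)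
     \<Rightarrow> nat \<Rightarrow> nat \<Rightarrow> nat \<Rightarrow> nat \<Rightarrow> real" where
  "hterm k l z a b c d =
     k (fst (z a)) (fst (z b)) *
       (l (snd (z a)) (snd (z b)) + l (snd (z c)) (snd (z d)) - 2 * l (snd (z a)) (snd (z c)))"

definition H :: "('x \<Rightarrow> 'x \<Rightarrow> real) \<Rightarrow> ('y \<Rightarrow> 'y \<Rightarrow> real) \<Rightarrow> (nat \<Rightarrow> 'x \<times> 'y)
     \<Rightarrow> nat \<Rightarrow> nat \<Rightarrow> nat \<Rightarrow> nat \<Rightarrow> real" where
  "H k l z i j q r = (1 / 24) *
     (\<Sum>p\<in>permutations_of_set {i, j, q, r}. hterm k l z (p ! 0) (p ! 1) (p ! 2) (p ! 3))"

definition eta_hat :: "('x \<Rightarrow> 'x \<Rightarrow> real) \<Rightarrow> ('y \<Rightarrow> 'y \<Rightarrow> real) \<Rightarrow> nat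
     \<Rightarrow> (nat \<Rightarrow> 'x \<times> 'y) \<Rightarrow> real" where
  "eta_hat k l n z = (1 / falling n 4) *
     (\<Sum>t\<in>tuples n 4. H k l z (t ! 0) (t ! 1) (t ! 2) (t ! 3))"

definition sigma2_hat :: "('x \<Rightarrow> 'x \<Rightarrow> real) \<Rightarrow> ('y \<Rightarrow> 'y \<Rightarrow> real) \<Rightarrow> nat
     \<Rightarrow> (nat \<Rightarrow> 'x \<times> 'y) \<Rightarrow> real" where
  "sigma2_hat k l n z = 16 *
     ((1 / (falling n 4 * falling (n - 1) 3)) *
        (\<Sum>t\<in>tuples n 4. \<Sum>s\<in>{s\<in>tuples n 3. t ! 0 \<notin> set s}.
           H k l z (t ! 0) (t ! 1) (t ! 2) (t ! 3) * H k l z (t ! 0) (s ! 0) (s ! 1) (s ! 2))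
      - (eta_hat k l n z)\<^sup>2)"

definition eta :: "('x \<times> 'y) measure \<Rightarrow> ('x \<Rightarrow> 'x \<Rightarrow> real) \<Rightarrow> ('y \<Rightarrow> 'y \<Rightarrow> real) \<Rightarrow> real" where
  "eta P k l = (\<integral>z. H k l z 1 2 3 4 \<partial>(PiM {1..7} (\<lambda>_. P)))"

definition sigma2 :: "('x \<times> 'y) measure \<Rightarrow> ('x \<Rightarrow> 'x \<Rightarrow> real) \<Rightarrow> ('y \<Rightarrow> 'y \<Rightarrow> real) \<Rightarrow> real" where
  "sigma2 P k l = 16 * ((\<integral>z. H k l z 1 2 3 4 * H k l z 1 5 6 7 \<partial>(PiM {1..7} (\<lambda>_. P)))
                        - (eta P k l)\<^sup>2)"

end

theory Submission
  imports Defs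
begin

text \<open>
  Averaging over the 24 orderings turns \<open>H\<close> into \<open>1/12\<close> times a sum over the three ways
  of splitting four samples into two pairs, each term a product of cross differences
  \<open>\<langle>\<phi> a - \<phi> b, \<phi> c - \<phi> d\<rangle>\<close> of the two kernels; hence \<open>\<bar>H\<bar> \<le> B = 8/3 \<nu>k \<nu>l\<close>.
  Both \<open>\<sigma>\<^sup>2\<close> and \<open>\<sigma>\<^sup>2\<close>-hat are \<open>16\<close> times a cross moment minus a squared mean.
  In the double averages defining the estimator, every pair of index tuples that share no sample
  (apart from the common anchor in the cross moment) has exactly the population expectation, by
  exchangeability and independence of the samples.  Only overlapping pairs contribute bias: a
  fraction at most \<open>9/n\<close> of the cross-moment terms, each off by at most \<open>2B\<^sup>2\<close>, and a fraction
  at most \<open>16/n\<close> of the terms of \<open>\<eta>\<close>-hat squared, each off by at most \<open>B\<^sup>2\<close> in the one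
  direction that matters, since the second moment of the unbiased \<open>\<eta>\<close>-hat exceeds \<open>\<eta>\<^sup>2\<close> by its
  variance.  Altogether the bias is at most \<open>16 (18 + 16) B\<^sup>2 / n \<le> 4608 \<nu>k\<^sup>2 \<nu>l\<^sup>2 / n\<close>.
\<close>

section \<open>Bounds on the kernel \<open>H\<close>\<close>

lemma sum_permutations_of_set_remove:
  assumes "finite A" "A \<noteq> {}"
  shows "(\<Sum>p\<in>permutations_of_set A. f p) = (\<Sum>a\<in>A. \<Sum>p\<in>permutations_of_set (A - {a}). f (a # p))"
proof -
  have "(\<Sum>p\<in>permutations_of_set A. f p)
      = (\<Sum>a\<in>A. \<Sum>p\<in>(\<lambda>xs. a # xs) ` permutations_of_set (A - {a}). f p)"
    unfolding permutations_of_set_nonempty[OF assms(2)]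
    by (rule sum.UNION_disjoint) (use assms in auto)
  also have "\<dots> = (\<Sum>a\<in>A. \<Sum>p\<in>permutations_of_set (A - {a}). f (a # p))"
    by (simp add: sum.reindex inj_on_def)
  finally show ?thesis .
qed

lemma sum_permutations_of_set_3:
  assumes "distinct [a, b, c]"
  shows "(\<Sum>p\<in>permutations_of_set {a, b, c}. f p) =
    f [a,b,c] + f [a,c,b] + f [b,a,c] + f [b,c,a] + f [c,a,b] + f [c,b,a]"
proof -
  have "{a,b,c} - {a} = {b,c}" "{a,b,c} - {b} = {a,c}" "{a,b,c} - {c} = {a,b}"
    using assms by auto
  with assms show ?thesis
    by (subst sum_permutations_of_set_remove) (simp_all add: permutations_of_set_doubleton ac_simps)
qed

lemma sum_permutations_of_set_4:
  assumes "distinct [a, b, c, d]"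
  shows "(\<Sum>p\<in>permutations_of_set {a, b, c, d}. f p) =
    f [a,b,c,d] + f [a,b,d,c] + f [a,c,b,d] + f [a,c,d,b] + f [a,d,b,c] + f [a,d,c,b] +
    f [b,a,c,d] + f [b,a,d,c] + f [b,c,a,d] + f [b,c,d,a] + f [b,d,a,c] + f [b,d,c,a] +
    f [c,a,b,d] + f [c,a,d,b] + f [c,b,a,d] + f [c,b,d,a] + f [c,d,a,b] + f [c,d,b,a] +
    f [d,a,b,c] + f [d,a,c,b] + f [d,b,a,c] + f [d,b,c,a] + f [d,c,a,b] + f [d,c,b,a]"
proof -
  have "{a,b,c,d} - {a} = {b,c,d}" "{a,b,c,d} - {b} = {a,c,d}" "{a,b,c,d} - {c} = {a,b,d}"
    "{a,b,c,d} - {d} = {a,b,c}"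
    using assms by auto
  with assms show ?thesis
    by (subst sum_permutations_of_set_remove) (simp_all add: sum_permutations_of_set_3 ac_simps)
qed

lemma pd_kernel_sym: "pd_kernel k \<Longrightarrow> k x y = k y x"
  unfolding pd_kernel_def by blast

lemma pd_kernel_quadratic_form_4:
  assumes "pd_kernel k"
  shows "0 \<le> c1*c1*k x1 x1 + c1*c2*k x1 x2 + c1*c3*k x1 x3 + c1*c4*k x1 x4
           + c2*c1*k x2 x1 + c2*c2*k x2 x2 + c2*c3*k x2 x3 + c2*c4*k x2 x4
           + c3*c1*k x3 x1 + c3*c2*k x3 x2 + c3*c3*k x3 x3 + c3*c4*k x3 x4
           + c4*c1*k x4 x1 + c4*c2*k x4 x2 + c4*c3*k x4 x3 + c4*c4*k x4 x4"
proof -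
  let ?xs = "[x1, x2, x3, x4]" and ?c = "(!) [c1, c2, c3, c4]"
  have "0 \<le> (\<Sum>i<length ?xs. \<Sum>j<length ?xs. ?c i * ?c j * k (?xs ! i) (?xs ! j))"
    using assms unfolding pd_kernel_def by blast
  then show ?thesis
    by (simp add: numeral_eq_Suc algebra_simps)
qed

lemma abs_pd_kernel_le:
  assumes "pd_kernel k" "\<forall>x. k x x \<le> \<nu>"
  shows "\<bar>k x y\<bar> \<le> \<nu>"
proof -
  have "0 \<le> k x x + k y y + 2 * k x y" "0 \<le> k x x + k y y - 2 * k x y"
    using pd_kernel_quadratic_form_4[OF assms(1), of 1 x 1 y 0 x 0 x]
      pd_kernel_quadratic_form_4[OF assms(1), of 1 x "-1" y 0 x 0 x]
      pd_kernel_sym[OF assms(1), of y x]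
    by simp_all
  then show ?thesis
    using assms(2) by (smt (verit))
qed

definition kernel_cross_diff :: "('a \<Rightarrow> 'a \<Rightarrow> real) \<Rightarrow> 'a \<Rightarrow> 'a \<Rightarrow> 'a \<Rightarrow> 'a \<Rightarrow> real" where
  "kernel_cross_diff k a b c d = k a c - k a d - k b c + k b d"

lemma abs_kernel_cross_diff_le:
  assumes "pd_kernel k" "\<forall>x. k x x \<le> \<nu>"
  shows "\<bar>kernel_cross_diff k a b c d\<bar> \<le> 4 * \<nu>"
proof -
  have sym: "\<And>x y. k y x = k x y"
    using pd_kernel_sym[OF assms(1)] by blast
  let ?q = "k a a + k b b + k c c + k d d - 2 * k a b - 2 * k c d"
  have "0 \<le> ?q + 2 * kernel_cross_diff k a b c d" "0 \<le> ?q - 2 * kernel_cross_diff k a b c d"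
    using pd_kernel_quadratic_form_4[OF assms(1), of 1 a "-1" b 1 c "-1" d]
      pd_kernel_quadratic_form_4[OF assms(1), of 1 a "-1" b "-1" c 1 d]
    unfolding kernel_cross_diff_def by (simp_all add: sym algebra_simps)
  moreover have "\<bar>k a b\<bar> \<le> \<nu>" "\<bar>k c d\<bar> \<le> \<nu>"
    using abs_pd_kernel_le[OF assms] by auto
  ultimately show ?thesis
    using assms(2) by (smt (verit))
qed

lemma abs_pairing_sum_le:
  fixes x1 x3 y1 y3 a b :: real
  assumes "\<bar>x1\<bar> \<le> a" "\<bar>x3\<bar> \<le> a" "\<bar>x1 + x3\<bar> \<le> a" "\<bar>y1\<bar> \<le> b" "\<bar>y3\<bar> \<le> b" "\<bar>y1 + y3\<bar> \<le> b"
  shows "\<bar>x1 * y1 + (x1 + x3) * (y1 + y3) + x3 * y3\<bar> \<le> 2 * a * b"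
proof -
  have "\<bar>x1 * y1 + (x1 + x3) * (y1 + y3) + x3 * y3\<bar>
      \<le> \<bar>x1\<bar> * \<bar>y1\<bar> + \<bar>x1 + x3\<bar> * \<bar>y1 + y3\<bar> + \<bar>x3\<bar> * \<bar>y3\<bar>"
    by (simp add: abs_mult[symmetric] abs_triangle_ineq order_trans[OF abs_triangle_ineq add_right_mono])
  also have "\<dots> \<le> (\<bar>x1\<bar> + \<bar>x1 + x3\<bar> + \<bar>x3\<bar>) * b"
    using assms(4-6) by (simp add: distrib_right mult_left_mono add_mono)
  also have "\<dots> \<le> 2 * a * b"
    using assms by (intro mult_right_mono) linarith+
  finally show ?thesis .
qed

definition hsic_core :: "('x \<Rightarrow> 'x \<Rightarrow> real) \<Rightarrow> ('y \<Rightarrow> 'y \<Rightarrow> real)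
     \<Rightarrow> 'x \<times> 'y \<Rightarrow> 'x \<times> 'y \<Rightarrow> 'x \<times> 'y \<Rightarrow> 'x \<times> 'y \<Rightarrow> real" where
  "hsic_core k l u0 u1 u2 u3 = (1/12) *
     (kernel_cross_diff k (fst u0) (fst u1) (fst u2) (fst u3) * kernel_cross_diff l (snd u0) (snd u1) (snd u2) (snd u3)
    + kernel_cross_diff k (fst u0) (fst u2) (fst u1) (fst u3) * kernel_cross_diff l (snd u0) (snd u2) (snd u1) (snd u3)
    + kernel_cross_diff k (fst u0) (fst u3) (fst u1) (fst u2) * kernel_cross_diff l (snd u0) (snd u3) (snd u1) (snd u2))"

lemma H_eq_hsic_core:
  assumes "pd_kernel k" "pd_kernel l" "distinct [i, j, q, r]"
  shows "H k l z i j q r = hsic_core k l (z i) (z j) (z q) (z r)"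
proof -
  have sym: "\<And>x y. k y x = k x y" "\<And>x y. l y x = l x y"
    using pd_kernel_sym[OF assms(1)] pd_kernel_sym[OF assms(2)] by blast+
  show ?thesis
    unfolding H_def sum_permutations_of_set_4[OF assms(3)] hsic_core_def kernel_cross_diff_def hterm_def
    by (simp only: numeral_2_eq_2 numeral_3_eq_3 One_nat_def nth_Cons_0 nth_Cons_Suc, simp only: sym)
      algebra
qed

lemma abs_hsic_core_le:
  assumes "pd_kernel k" "pd_kernel l" "\<forall>x. k x x \<le> \<nu>k" "\<forall>y. l y y \<le> \<nu>l"
  shows "\<bar>hsic_core k l u0 u1 u2 u3\<bar> \<le> 8/3 * \<nu>k * \<nu>l"
proof -
  define x1 where "x1 = kernel_cross_diff k (fst u0) (fst u1) (fst u2) (fst u3)"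
  define x3 where "x3 = kernel_cross_diff k (fst u0) (fst u3) (fst u1) (fst u2)"
  define y1 where "y1 = kernel_cross_diff l (snd u0) (snd u1) (snd u2) (snd u3)"
  define y3 where "y3 = kernel_cross_diff l (snd u0) (snd u3) (snd u1) (snd u2)"
  txt \<open>The middle pairing is the sum of the other two, which gives \<open>8/3\<close> instead of \<open>4\<close>.\<close>
  have x2: "kernel_cross_diff k (fst u0) (fst u2) (fst u1) (fst u3) = x1 + x3"
    unfolding x1_def x3_def kernel_cross_diff_def using pd_kernel_sym[OF assms(1)] by simp
  have y2: "kernel_cross_diff l (snd u0) (snd u2) (snd u1) (snd u3) = y1 + y3"
    unfolding y1_def y3_def kernel_cross_diff_def using pd_kernel_sym[OF assms(2)] by simp
  have "\<bar>x1 + x3\<bar> \<le> 4 * \<nu>k" "\<bar>y1 + y3\<bar> \<le> 4 * \<nu>l"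
    unfolding x2[symmetric] y2[symmetric]
    by (intro abs_kernel_cross_diff_le assms)+
  then have "\<bar>x1 * y1 + (x1 + x3) * (y1 + y3) + x3 * y3\<bar> \<le> 2 * (4 * \<nu>k) * (4 * \<nu>l)"
    unfolding x1_def x3_def y1_def y3_def
    by (intro abs_pairing_sum_le abs_kernel_cross_diff_le assms)
  moreover have "hsic_core k l u0 u1 u2 u3 = (1/12) * (x1 * y1 + (x1 + x3) * (y1 + y3) + x3 * y3)"
    unfolding hsic_core_def x2 y2 x1_def x3_def y1_def y3_def ..
  ultimately show ?thesis
    by simp
qed

section \<open>Counting index tuples\<close>

lemma falling_eq_prod: "k \<le> n \<Longrightarrow> falling n k = (\<Prod>i<k. real n - real i)"
  using fact_binomial[of k n, where 'a=real] gbinomial_mult_fact[of k "real n"]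
  by (simp add: falling_def binomial_gbinomial atLeast0LessThan)

lemma card_distinct_lists_subset:
  assumes "finite A"
  shows "real (card {xs. length xs = k \<and> distinct xs \<and> set xs \<subseteq> A}) = (\<Prod>i<k. real (card A) - real i)"
proof (cases "k \<le> card A")
  case True
  have "\<Prod>{card A - k + 1..card A} = (\<Prod>i<k. card A - i)"
    by (rule prod.reindex_bij_witness[of _ "\<lambda>i. card A - i" "\<lambda>i. card A - i"]) (use True in auto)
  then show ?thesis
    using card_lists_distinct_length_eq[OF assms True] True by simp
next
  case False
  have "length xs \<le> card A" if "distinct xs" "set xs \<subseteq> A" for xs
    using card_mono[OF assms that(2)] distinct_card[OF that(1)] by simp
  with False have "{xs. length xs = k \<and> distinct xs \<and> set xs \<subseteq> A} = {}"
    by auto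
  moreover have "(\<Prod>i<k. real (card A) - real i) = 0"
    using False by (intro prod_zero bexI[of _ "card A"]) auto
  ultimately show ?thesis
    by (metis card.empty of_nat_0)
qed

lemma finite_tuples: "finite (tuples n k)"
  by (rule finite_subset[of _ "{xs. set xs \<subseteq> {1..n} \<and> length xs = k}"])
     (auto simp: tuples_def intro: finite_lists_length_eq)

definition tuples_avoiding :: "nat \<Rightarrow> nat \<Rightarrow> nat set \<Rightarrow> nat list set" where
  "tuples_avoiding n k B = {s \<in> tuples n k. set s \<inter> B = {}}"

lemma card_tuples_avoiding:
  assumes "B \<subseteq> {1..n}"
  shows "real (card (tuples_avoiding n k B)) = (\<Prod>i<k. real n - real (card B) - real i)"
proof -
  have "tuples_avoiding n k B = {xs. length xs = k \<and> distinct xs \<and> set xs \<subseteq> {1..n} - B}"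
    by (auto simp: tuples_avoiding_def tuples_def)
  moreover have "card ({1..n} - B) = n - card B" "card B \<le> n"
    using assms card_mono[OF _ assms] by (simp_all add: card_Diff_subset finite_subset)
  ultimately show ?thesis
    using card_distinct_lists_subset[of "{1..n} - B" k] by simp
qed

lemma card_tuples: "k \<le> n \<Longrightarrow> real (card (tuples n k)) = falling n k"
  using card_tuples_avoiding[of "{}" n k] by (simp add: tuples_avoiding_def falling_eq_prod)

lemma falling_pos: "0 < falling n k"
  by (simp add: falling_def)

lemma tuples_nonempty: "k \<le> n \<Longrightarrow> tuples n k \<noteq> {}"
  using card_tuples[of k n] falling_pos[of n k] by auto

lemma falling_4_eq: "n \<ge> 4 \<Longrightarrow> falling n 4 = real n * (real n - 1) * (real n - 2) * (real n - 3)"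
  by (simp add: falling_eq_prod numeral_eq_Suc)

lemma falling_3_eq: "n \<ge> 4 \<Longrightarrow> falling (n - 1) 3 = (real n - 1) * (real n - 2) * (real n - 3)"
  by (simp add: falling_eq_prod numeral_eq_Suc algebra_simps)

lemma card_tuples_avoiding_tuple:
  assumes "t \<in> tuples n 4"
  shows "real (card (tuples_avoiding n 3 {t ! 0})) = (real n - 1) * (real n - 2) * (real n - 3)"
    and "real (card (tuples_avoiding n 3 (set t))) = (real n - 4) * (real n - 5) * (real n - 6)"
    and "real (card (tuples_avoiding n 4 (set t))) = (real n - 4) * (real n - 5) * (real n - 6) * (real n - 7)"
proof -
  have t: "length t = 4" "distinct t" "set t \<subseteq> {1..n}"
    using assms by (simp_all add: tuples_def)
  then have "t ! 0 \<in> set t"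
    by simp
  with t have "{t ! 0} \<subseteq> {1..n}" "set t \<subseteq> {1..n}" "card (set t) = 4"
    by (blast, blast, simp add: distinct_card)
  then show "real (card (tuples_avoiding n 3 {t ! 0})) = (real n - 1) * (real n - 2) * (real n - 3)"
    and "real (card (tuples_avoiding n 3 (set t))) = (real n - 4) * (real n - 5) * (real n - 6)"
    and "real (card (tuples_avoiding n 4 (set t))) = (real n - 4) * (real n - 5) * (real n - 6) * (real n - 7)"
    by (simp_all add: card_tuples_avoiding numeral_eq_Suc algebra_simps)
qed

lemma tuples_3E:
  assumes "t \<in> tuples n 3"
  obtains a b c where "t = [a, b, c]" "distinct [a, b, c]" "{a, b, c} \<subseteq> {1..n}"
proof -
  have t: "length t = 3" "distinct t" "set t \<subseteq> {1..n}"
    using assms by (simp_all add: tuples_def)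
  from t(1) obtain a b c where t_eq: "t = [a, b, c]"
    by (auto simp: numeral_eq_Suc length_Suc_conv)
  show ?thesis
    by (rule that[OF t_eq]) (use t t_eq in simp_all)
qed

lemma tuples_4E:
  assumes "t \<in> tuples n 4"
  obtains a b c d where "t = [a, b, c, d]" "distinct [a, b, c, d]" "{a, b, c, d} \<subseteq> {1..n}"
proof -
  have t: "length t = 4" "distinct t" "set t \<subseteq> {1..n}"
    using assms by (simp_all add: tuples_def)
  from t(1) obtain a b c d where t_eq: "t = [a, b, c, d]"
    by (auto simp: numeral_eq_Suc length_Suc_conv)
  show ?thesis
    by (rule that[OF t_eq]) (use t t_eq in simp_all)
qed

lemma overlap_fraction_3_le:
  fixes a :: real
  assumes "a \<ge> 4"
  shows "1 - (a-4)*(a-5)*(a-6) / ((a-1)*(a-2)*(a-3)) \<le> 9 / a"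
proof -
  have N: "0 < (a-1)*(a-2)*(a-3)"
    using assms by (intro mult_pos_pos) auto
  have "9 * ((a-1)*(a-2)*(a-3)) - a * ((a-1)*(a-2)*(a-3) - (a-4)*(a-5)*(a-6)) = (a-4)*(9*a+21) + 30"
    by (simp add: algebra_simps)
  also have "\<dots> \<ge> 0"
    using assms by (intro add_nonneg_nonneg mult_nonneg_nonneg) auto
  finally have "a * ((a-1)*(a-2)*(a-3) - (a-4)*(a-5)*(a-6)) \<le> 9 * ((a-1)*(a-2)*(a-3))"
    by simp
  with N assms show ?thesis
    by (simp add: field_simps)
qed

lemma overlap_fraction_4_le:
  fixes a :: real
  assumes "a \<ge> 4"
  shows "1 - (a-4)*(a-5)*(a-6)*(a-7) / (a*(a-1)*(a-2)*(a-3)) \<le> 16 / a"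
proof -
  have N: "0 < a*(a-1)*(a-2)*(a-3)"
    using assms by (intro mult_pos_pos) auto
  have "16 * (a*(a-1)*(a-2)*(a-3)) - a * (a*(a-1)*(a-2)*(a-3) - (a-4)*(a-5)*(a-6)*(a-7))
      = 24 * a * (3 * (a - 19/6)\<^sup>2 + 11/12)"
    by (simp add: algebra_simps power2_eq_square)
  also have "\<dots> \<ge> 0"
    using assms by simp
  finally have "a * (a*(a-1)*(a-2)*(a-3) - (a-4)*(a-5)*(a-6)*(a-7)) \<le> 16 * (a*(a-1)*(a-2)*(a-3))"
    by simp
  with N assms show ?thesis
    by (simp add: field_simps)
qed

lemma sum_sum_deviation_le:
  fixes f :: "'i \<Rightarrow> 'j \<Rightarrow> real"
  assumes I: "finite I" "I \<noteq> {}"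
    and J: "\<And>i. i \<in> I \<Longrightarrow> finite (J i)" and D: "\<And>i. i \<in> I \<Longrightarrow> D i \<subseteq> J i"
    and m: "\<And>i. i \<in> I \<Longrightarrow> real (card (J i)) = m" "m > 0"
    and d: "\<And>i. i \<in> I \<Longrightarrow> real (card (D i)) = d"
    and c: "\<And>i j. i \<in> I \<Longrightarrow> j \<in> D i \<Longrightarrow> f i j = c"
    and M: "\<And>i j. i \<in> I \<Longrightarrow> j \<in> J i \<Longrightarrow> f i j - c \<le> M"
  shows "1 / (real (card I) * m) * (\<Sum>i\<in>I. \<Sum>j\<in>J i. f i j) - c \<le> (1 - d / m) * M"
proof -
  have "(\<Sum>j\<in>J i. f i j) - m * c \<le> (m - d) * M" if i: "i \<in> I" for i
  proof -
    have "(\<Sum>j\<in>J i. f i j) - m * c = (\<Sum>j\<in>J i. f i j - c)"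
      using m(1)[OF i] by (simp add: sum_subtractf)
    also have "\<dots> = (\<Sum>j\<in>J i - D i. f i j - c) + (\<Sum>j\<in>D i. f i j - c)"
      by (rule sum.subset_diff[OF D[OF i] J[OF i]])
    also have "(\<Sum>j\<in>D i. f i j - c) = 0"
      using c[OF i] by simp
    also have "(\<Sum>j\<in>J i - D i. f i j - c) \<le> real (card (J i - D i)) * M"
      using M[OF i] by (intro sum_bounded_above) auto
    also have "real (card (J i - D i)) = m - d"
      using D[OF i] J[OF i] m(1)[OF i] d[OF i] card_mono[OF J[OF i] D[OF i]]
      by (simp add: card_Diff_subset finite_subset)
    finally show ?thesis
      by simp
  qed
  then have "(\<Sum>i\<in>I. (\<Sum>j\<in>J i. f i j) - m * c) \<le> (\<Sum>i\<in>I. (m - d) * M)"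
    by (rule sum_mono)
  then have deviation: "(\<Sum>i\<in>I. \<Sum>j\<in>J i. f i j) - real (card I) * m * c \<le> real (card I) * (m - d) * M"
    by (simp add: sum_subtractf)
  have card_pos: "0 < real (card I)"
    using I by (simp add: card_gt_0_iff)
  then have "1 / (real (card I) * m) * (\<Sum>i\<in>I. \<Sum>j\<in>J i. f i j) - c
      = ((\<Sum>i\<in>I. \<Sum>j\<in>J i. f i j) - real (card I) * m * c) / (real (card I) * m)"
    using m(2) by (simp add: field_simps)
  also have "\<dots> \<le> real (card I) * (m - d) * M / (real (card I) * m)"
    using card_pos m(2) by (intro divide_right_mono[OF deviation]) simp
  also have "\<dots> = (1 - d / m) * M"
    using card_pos m(2) by (simp add: field_simps)
  finally show ?thesis .
qed

lemma abs_sum_sum_deviation_le: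
  fixes f :: "'i \<Rightarrow> 'j \<Rightarrow> real"
  assumes "finite I" "I \<noteq> {}"
    and "\<And>i. i \<in> I \<Longrightarrow> finite (J i)" and "\<And>i. i \<in> I \<Longrightarrow> D i \<subseteq> J i"
    and "\<And>i. i \<in> I \<Longrightarrow> real (card (J i)) = m" "m > 0"
    and "\<And>i. i \<in> I \<Longrightarrow> real (card (D i)) = d"
    and "\<And>i j. i \<in> I \<Longrightarrow> j \<in> D i \<Longrightarrow> f i j = c"
    and M: "\<And>i j. i \<in> I \<Longrightarrow> j \<in> J i \<Longrightarrow> \<bar>f i j - c\<bar> \<le> M"
  shows "\<bar>1 / (real (card I) * m) * (\<Sum>i\<in>I. \<Sum>j\<in>J i. f i j) - c\<bar> \<le> (1 - d / m) * M"
proof -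
  have "f i j - c \<le> M" "- f i j - - c \<le> M" if "i \<in> I" "j \<in> J i" for i j
    using M[OF that] by arith+
  then have "1 / (real (card I) * m) * (\<Sum>i\<in>I. \<Sum>j\<in>J i. f i j) - c \<le> (1 - d / m) * M"
    and "1 / (real (card I) * m) * (\<Sum>i\<in>I. \<Sum>j\<in>J i. - f i j) - - c \<le> (1 - d / m) * M"
    by (intro sum_sum_deviation_le[OF assms(1-7)]; simp add: assms(8))+
  then show ?thesis
    by (simp add: sum_negf)
qed

section \<open>Integrals over i.i.d. samples\<close>

lemma (in prob_space) integrable_abs_le:
  fixes f :: "'a \<Rightarrow> real"
  shows "f \<in> borel_measurable M \<Longrightarrow> (\<And>x. \<bar>f x\<bar> \<le> B) \<Longrightarrow> integrable M f"
  by (intro integrable_const_bound[where B=B]) auto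

lemma (in prob_space) abs_integral_le:
  fixes f :: "'a \<Rightarrow> real"
  assumes "f \<in> borel_measurable M" "\<And>x. \<bar>f x\<bar> \<le> B"
  shows "\<bar>integral\<^sup>L M f\<bar> \<le> B"
proof -
  have "integrable M f"
    using assms by (rule integrable_abs_le)
  moreover have "f x \<le> B" "- B \<le> f x" for x
    using assms(2)[of x] by linarith+
  ultimately show ?thesis
    using integral_le_const[of f B] integral_ge_const[of f "- B"] by (simp add: abs_le_iff)
qed

lemma integrable_double_sum:
  "(\<And>i j. i \<in> I \<Longrightarrow> j \<in> J i \<Longrightarrow> integrable M (f i j)) \<Longrightarrow>
    integrable M (\<lambda>z. c * (\<Sum>i\<in>I. \<Sum>j\<in>J i. f i j z :: real))"
  by (intro integrable_mult_right integrable_sum) auto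

lemma integral_double_sum:
  "(\<And>i j. i \<in> I \<Longrightarrow> j \<in> J i \<Longrightarrow> integrable M (f i j)) \<Longrightarrow>
    (\<integral>z. c * (\<Sum>i\<in>I. \<Sum>j\<in>J i. f i j z :: real) \<partial>M) = c * (\<Sum>i\<in>I. \<Sum>j\<in>J i. \<integral>z. f i j z \<partial>M)"
  by (simp add: integral_sum integrable_sum)

lemma measurable_PiM_coord_pair:
  assumes "(\<lambda>(a, b). g a b) \<in> borel_measurable (P \<Otimes>\<^sub>M P)" "a \<in> I" "b \<in> I"
  shows "(\<lambda>z. g (z a) (z b) :: real) \<in> borel_measurable (PiM I (\<lambda>_. P))"
proof -
  have "(\<lambda>z. (z a, z b)) \<in> measurable (PiM I (\<lambda>_. P)) (P \<Otimes>\<^sub>M P)"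
    using assms(2,3) by measurable
  from measurable_compose[OF this assms(1)] show ?thesis
    by simp
qed

lemma integral_PiM_distinct_coords:
  fixes G :: "(nat \<Rightarrow> 'a) \<Rightarrow> real" and xs ys :: "'i list"
  assumes P: "prob_space P"
    and xs: "distinct xs" "set xs \<subseteq> I" "length xs = m"
    and ys: "distinct ys" "set ys \<subseteq> J" "length ys = m"
    and G: "G \<in> borel_measurable (PiM {..<m} (\<lambda>_. P))"
  shows "(\<integral>z. G (\<lambda>j\<in>{..<m}. z (xs ! j)) \<partial>PiM I (\<lambda>_. P))
       = (\<integral>z. G (\<lambda>j\<in>{..<m}. z (ys ! j)) \<partial>PiM J (\<lambda>_. P))"
proof -
  have "(\<integral>z. G (\<lambda>j\<in>{..<m}. z (zs ! j)) \<partial>PiM K (\<lambda>_. P)) = (\<integral>w. G w \<partial>PiM {..<m} (\<lambda>_. P))"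
    if "distinct zs" "set zs \<subseteq> K" "length zs = m" for zs :: "'i list" and K
  proof -
    have "inj_on ((!) zs) {..<m}" "(!) zs \<in> {..<m} \<rightarrow> K"
      using that by (auto simp: inj_on_def nth_eq_iff_index_eq)
    then have "distr (PiM K (\<lambda>_. P)) (PiM {..<m} (\<lambda>_. P)) (\<lambda>z. \<lambda>j\<in>{..<m}. z (zs ! j))
        = PiM {..<m} (\<lambda>_. P)"
      using distr_PiM_reindex[of K "\<lambda>_. P" "(!) zs" "{..<m}"] P by simp
    moreover have "(\<lambda>z. \<lambda>j\<in>{..<m}. z (zs ! j)) \<in> measurable (PiM K (\<lambda>_. P)) (PiM {..<m} (\<lambda>_. P))"
      using that by (intro measurable_restrict measurable_component_singleton) auto
    ultimately show ?thesis
      using integral_distr[OF _ G] by metis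
  qed
  from this[OF xs] this[OF ys] show ?thesis
    by simp
qed

lemma indep_vars_PiM_coords:
  assumes P: "prob_space P" and "I \<noteq> {}"
  shows "prob_space.indep_vars (PiM I (\<lambda>_. P)) (\<lambda>_. P) (\<lambda>i z. z i) I"
proof -
  interpret prob_space "PiM I (\<lambda>_. P)"
    by (rule prob_space_PiM) (use P in auto)
  have "distr (PiM I (\<lambda>_. P)) (PiM I (\<lambda>_. P)) (\<lambda>x. \<lambda>i\<in>I. x i) = PiM I (\<lambda>_. P)"
    by (subst distr_cong[of _ _ _ _ _ "\<lambda>x. x"]) (auto simp: space_PiM)
  also have "\<dots> = PiM I (\<lambda>i. distr (PiM I (\<lambda>_. P)) P (\<lambda>x. x i))"
    by (rule PiM_cong) (use distr_PiM_component[of I "\<lambda>_. P"] P in auto)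
  finally show ?thesis
    using assms(2) by (subst indep_vars_iff_distr_eq_PiM') auto
qed

lemma integral_PiM_mult_disjoint_coords:
  fixes f g :: "(nat \<Rightarrow> 'a) \<Rightarrow> real"
  assumes P: "prob_space P" and AB: "A \<inter> B = {}" "A \<subseteq> I" "B \<subseteq> I" "I \<noteq> {}"
    and f: "f \<in> borel_measurable (PiM A (\<lambda>_. P))" "integrable (PiM I (\<lambda>_. P)) (\<lambda>z. f (restrict z A))"
    and g: "g \<in> borel_measurable (PiM B (\<lambda>_. P))" "integrable (PiM I (\<lambda>_. P)) (\<lambda>z. g (restrict z B))"
  shows "(\<integral>z. f (restrict z A) * g (restrict z B) \<partial>PiM I (\<lambda>_. P))
       = (\<integral>z. f (restrict z A) \<partial>PiM I (\<lambda>_. P)) * (\<integral>z. g (restrict z B) \<partial>PiM I (\<lambda>_. P))"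
proof -
  interpret prob_space "PiM I (\<lambda>_. P)"
    by (rule prob_space_PiM) (use P in auto)
  have "indep_var (PiM A (\<lambda>_. P)) (\<lambda>z. restrict z A) (PiM B (\<lambda>_. P)) (\<lambda>z. restrict z B)"
    using indep_var_restrict[OF indep_vars_PiM_coords[OF P AB(4)] AB(1-3)] by simp
  then have "indep_var borel (f \<circ> (\<lambda>z. restrict z A)) borel (g \<circ> (\<lambda>z. restrict z B))"
    using f(1) g(1) by (rule indep_var_compose)
  from indep_var_lebesgue_integral[OF this] f(2) g(2) show ?thesis
    by (simp add: comp_def)
qed

section \<open>Bias of the variance estimator\<close>

definition H_tuple :: "('x \<Rightarrow> 'x \<Rightarrow> real) \<Rightarrow> ('y \<Rightarrow> 'y \<Rightarrow> real) \<Rightarrow> (nat \<Rightarrow> 'x \<times> 'y) \<Rightarrow> nat list \<Rightarrow> real"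
  where "H_tuple k l z t = H k l z (t ! 0) (t ! 1) (t ! 2) (t ! 3)"

definition H_anchored :: "('x \<Rightarrow> 'x \<Rightarrow> real) \<Rightarrow> ('y \<Rightarrow> 'y \<Rightarrow> real) \<Rightarrow> (nat \<Rightarrow> 'x \<times> 'y)
     \<Rightarrow> nat list \<Rightarrow> nat list \<Rightarrow> real"
  where "H_anchored k l z t s = H k l z (t ! 0) (s ! 0) (s ! 1) (s ! 2)"

definition cross_moment_hat :: "('x \<Rightarrow> 'x \<Rightarrow> real) \<Rightarrow> ('y \<Rightarrow> 'y \<Rightarrow> real) \<Rightarrow> nat
     \<Rightarrow> (nat \<Rightarrow> 'x \<times> 'y) \<Rightarrow> real" where
  "cross_moment_hat k l n z = (1 / (falling n 4 * falling (n - 1) 3)) *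
     (\<Sum>t\<in>tuples n 4. \<Sum>s\<in>tuples_avoiding n 3 {t ! 0}. H_tuple k l z t * H_anchored k l z t s)"

lemma sigma2_hat_eq: "sigma2_hat k l n z = 16 * (cross_moment_hat k l n z - (eta_hat k l n z)\<^sup>2)"
  by (simp add: sigma2_hat_def cross_moment_hat_def tuples_avoiding_def H_tuple_def H_anchored_def)

lemma eta_hat_eq: "eta_hat k l n z = (1 / falling n 4) * (\<Sum>t\<in>tuples n 4. H_tuple k l z t)"
  by (simp add: eta_hat_def H_tuple_def)

lemma eta_hat_sq_eq:
  "(eta_hat k l n z)\<^sup>2 =
    1 / (falling n 4 * falling n 4) * (\<Sum>t\<in>tuples n 4. \<Sum>t'\<in>tuples n 4. H_tuple k l z t * H_tuple k l z t')"
  by (simp add: eta_hat_eq power2_eq_square sum_product)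

locale hsic_sample =
  fixes P :: "('x \<times> 'y) measure" and k :: "'x \<Rightarrow> 'x \<Rightarrow> real" and l :: "'y \<Rightarrow> 'y \<Rightarrow> real"
    and \<nu>k \<nu>l :: real
  assumes prob_space_P: "prob_space P"
    and pd_k: "pd_kernel k" and pd_l: "pd_kernel l"
    and k_measurable: "(\<lambda>(a, b). k (fst a) (fst b)) \<in> borel_measurable (P \<Otimes>\<^sub>M P)"
    and l_measurable: "(\<lambda>(a, b). l (snd a) (snd b)) \<in> borel_measurable (P \<Otimes>\<^sub>M P)"
    and k_diag_le: "\<forall>x. k x x \<le> \<nu>k" and l_diag_le: "\<forall>y. l y y \<le> \<nu>l"
begin

abbreviation samples :: "nat set \<Rightarrow> (nat \<Rightarrow> 'x \<times> 'y) measure" where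
  "samples I \<equiv> PiM I (\<lambda>_. P)"

lemma prob_space_samples: "prob_space (samples I)"
  by (rule prob_space_PiM) (use prob_space_P in auto)

lemma hsic_core_measurable:
  assumes "{a, b, c, d} \<subseteq> I"
  shows "(\<lambda>z. hsic_core k l (z a) (z b) (z c) (z d)) \<in> borel_measurable (samples I)"
proof -
  have K: "(\<lambda>z. k (fst (z u)) (fst (z v))) \<in> borel_measurable (samples I)"
    and L: "(\<lambda>z. l (snd (z u)) (snd (z v))) \<in> borel_measurable (samples I)" if "u \<in> I" "v \<in> I" for u v
    using measurable_PiM_coord_pair[where g="\<lambda>a b. k (fst a) (fst b)", OF k_measurable that]
      measurable_PiM_coord_pair[where g="\<lambda>a b. l (snd a) (snd b)", OF l_measurable that]
    by simp_all
  have "a \<in> I" "b \<in> I" "c \<in> I" "d \<in> I"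
    using assms by auto
  then show ?thesis
    unfolding hsic_core_def kernel_cross_diff_def
    by (intro borel_measurable_times borel_measurable_add borel_measurable_diff borel_measurable_const K L)
qed

lemma H_measurable:
  "distinct [a, b, c, d] \<Longrightarrow> {a, b, c, d} \<subseteq> I \<Longrightarrow> (\<lambda>z. H k l z a b c d) \<in> borel_measurable (samples I)"
  by (simp add: H_eq_hsic_core[OF pd_k pd_l] hsic_core_measurable)

lemma abs_H_le:
  assumes "distinct [a, b, c, d]"
  shows "\<bar>H k l z a b c d\<bar> \<le> 8/3 * \<nu>k * \<nu>l"
  unfolding H_eq_hsic_core[OF pd_k pd_l assms] by (rule abs_hsic_core_le[OF pd_k pd_l k_diag_le l_diag_le])

lemma H_tuple_measurable: "t \<in> tuples n 4 \<Longrightarrow> (\<lambda>z. H_tuple k l z t) \<in> borel_measurable (samples {1..n})"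
  by (elim tuples_4E) (simp add: H_tuple_def H_measurable)

lemma abs_H_tuple_le: "t \<in> tuples n 4 \<Longrightarrow> \<bar>H_tuple k l z t\<bar> \<le> 8/3 * \<nu>k * \<nu>l"
  by (elim tuples_4E) (hypsubst, unfold H_tuple_def, rule abs_H_le, simp)

lemma H_anchored_measurable:
  "t \<in> tuples n 4 \<Longrightarrow> s \<in> tuples_avoiding n 3 {t ! 0} \<Longrightarrow>
    (\<lambda>z. H_anchored k l z t s) \<in> borel_measurable (samples {1..n})"
  unfolding tuples_avoiding_def by (elim tuples_4E CollectE conjE tuples_3E) (simp add: H_anchored_def H_measurable)

lemma abs_H_anchored_le:
  "t \<in> tuples n 4 \<Longrightarrow> s \<in> tuples_avoiding n 3 {t ! 0} \<Longrightarrow> \<bar>H_anchored k l z t s\<bar> \<le> 8/3 * \<nu>k * \<nu>l"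
  unfolding tuples_avoiding_def
  by (elim tuples_4E CollectE conjE tuples_3E) (hypsubst, unfold H_anchored_def, rule abs_H_le, simp)

lemma H_tuple_mul_integrable_bounded:
  assumes "t \<in> tuples n 4" "f \<in> borel_measurable (samples {1..n})" "\<And>z. \<bar>f z\<bar> \<le> 8/3 * \<nu>k * \<nu>l"
  shows "integrable (samples {1..n}) (\<lambda>z. H_tuple k l z t * f z)"
    and "\<bar>\<integral>z. H_tuple k l z t * f z \<partial>samples {1..n}\<bar> \<le> (8/3 * \<nu>k * \<nu>l)\<^sup>2"
proof -
  have B: "0 \<le> 8/3 * \<nu>k * \<nu>l"
    using order_trans[OF abs_ge_zero assms(3)] .
  have "\<bar>H_tuple k l z t * f z\<bar> \<le> (8/3 * \<nu>k * \<nu>l)\<^sup>2" for z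
    unfolding abs_mult power2_eq_square by (rule mult_mono[OF abs_H_tuple_le[OF assms(1)] assms(3) B abs_ge_zero])
  moreover have "(\<lambda>z. H_tuple k l z t * f z) \<in> borel_measurable (samples {1..n})"
    using H_tuple_measurable[OF assms(1)] assms(2) by measurable
  ultimately show "integrable (samples {1..n}) (\<lambda>z. H_tuple k l z t * f z)"
    and "\<bar>\<integral>z. H_tuple k l z t * f z \<partial>samples {1..n}\<bar> \<le> (8/3 * \<nu>k * \<nu>l)\<^sup>2"
    using prob_space.integrable_abs_le[OF prob_space_samples] prob_space.abs_integral_le[OF prob_space_samples]
    by blast+
qed

lemma integral_H_tuple:
  assumes "t \<in> tuples n 4"
  shows "(\<integral>z. H_tuple k l z t \<partial>samples {1..n}) = eta P k l"
proof -
  obtain a b c d where t: "t = [a, b, c, d]" "distinct [a, b, c, d]" "{a, b, c, d} \<subseteq> {1..n}"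
    using assms by (rule tuples_4E)
  define G where "G w = hsic_core k l (w 0) (w 1) (w 2) (w 3)" for w :: "nat \<Rightarrow> 'x \<times> 'y"
  have G: "G \<in> borel_measurable (samples {..<4})"
    unfolding G_def by (rule hsic_core_measurable) auto
  have "(\<integral>z. H_tuple k l z t \<partial>samples {1..n}) = (\<integral>z. G (\<lambda>j\<in>{..<4}. z ([a, b, c, d] ! j)) \<partial>samples {1..n})"
    using t by (simp add: G_def H_tuple_def H_eq_hsic_core[OF pd_k pd_l])
  also have "\<dots> = (\<integral>z. G (\<lambda>j\<in>{..<4}. z ([1, 2, 3, 4] ! j)) \<partial>samples {1..7})"
    using t by (intro integral_PiM_distinct_coords[OF prob_space_P _ _ _ _ _ _ G]) auto
  also have "\<dots> = eta P k l"
    by (simp add: eta_def G_def H_eq_hsic_core[OF pd_k pd_l])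
  finally show ?thesis .
qed

lemma integral_H_tuple_mul_H_anchored:
  assumes "t \<in> tuples n 4" "s \<in> tuples_avoiding n 3 (set t)"
  shows "(\<integral>z. H_tuple k l z t * H_anchored k l z t s \<partial>samples {1..n})
       = (\<integral>z. H k l z 1 2 3 4 * H k l z 1 5 6 7 \<partial>samples {1..7})"
proof -
  obtain a b c d where t: "t = [a, b, c, d]" "distinct [a, b, c, d]" "{a, b, c, d} \<subseteq> {1..n}"
    using assms(1) by (rule tuples_4E)
  obtain e f g where s: "s = [e, f, g]" "distinct [e, f, g]" "{e, f, g} \<subseteq> {1..n}"
    using assms(2) unfolding tuples_avoiding_def by (blast elim: tuples_3E)
  define G where "G w = hsic_core k l (w 0) (w 1) (w 2) (w 3) * hsic_core k l (w 0) (w 4) (w 5) (w 6)"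
    for w :: "nat \<Rightarrow> 'x \<times> 'y"
  have G: "G \<in> borel_measurable (samples {..<7})"
    unfolding G_def by (intro borel_measurable_times hsic_core_measurable) auto
  have d: "distinct [a, b, c, d, e, f, g]"
    using t s assms(2) by (auto simp: tuples_avoiding_def)
  have "(\<integral>z. H_tuple k l z t * H_anchored k l z t s \<partial>samples {1..n})
      = (\<integral>z. G (\<lambda>j\<in>{..<7}. z ([a, b, c, d, e, f, g] ! j)) \<partial>samples {1..n})"
    using t s d by (simp add: G_def H_tuple_def H_anchored_def H_eq_hsic_core[OF pd_k pd_l])
  also have "\<dots> = (\<integral>z. G (\<lambda>j\<in>{..<7}. z ([1, 2, 3, 4, 5, 6, 7] ! j)) \<partial>samples {1..7})"
    using t s d by (intro integral_PiM_distinct_coords[OF prob_space_P _ _ _ _ _ _ G]) auto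
  also have "\<dots> = (\<integral>z. H k l z 1 2 3 4 * H k l z 1 5 6 7 \<partial>samples {1..7})"
    by (simp add: G_def H_eq_hsic_core[OF pd_k pd_l])
  finally show ?thesis .
qed

lemma integral_H_tuple_mul_disjoint:
  assumes t: "t \<in> tuples n 4" and t': "t' \<in> tuples_avoiding n 4 (set t)"
  shows "(\<integral>z. H_tuple k l z t * H_tuple k l z t' \<partial>samples {1..n}) = (eta P k l)\<^sup>2"
proof -
  have t'_tuple: "t' \<in> tuples n 4" and disj: "set t \<inter> set t' = {}"
    using t' by (auto simp: tuples_avoiding_def)
  define F where "F u = (\<lambda>w. hsic_core k l (w (u!0)) (w (u!1)) (w (u!2)) (w (u!3)))"
    for u :: "nat list"
  have H_F: "H_tuple k l z u = F u (restrict z (set u))" if "u \<in> tuples n 4" for u z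
    using that by (elim tuples_4E) (simp add: F_def H_tuple_def H_eq_hsic_core[OF pd_k pd_l])
  have F_measurable: "F u \<in> borel_measurable (samples (set u))" if "u \<in> tuples n 4" for u
    using that by (elim tuples_4E) (simp add: F_def hsic_core_measurable)
  have F_integrable: "integrable (samples {1..n}) (\<lambda>z. F u (restrict z (set u)))" if "u \<in> tuples n 4" for u
    using prob_space.integrable_abs_le[OF prob_space_samples H_tuple_measurable[OF that] abs_H_tuple_le[OF that]]
    by (simp only: H_F[OF that])
  have "set t \<subseteq> {1..n}" "set t' \<subseteq> {1..n}"
    using t t'_tuple by (simp_all add: tuples_def)
  moreover have "{1..n} \<noteq> {}"
    using t by (elim tuples_4E) auto
  ultimately have "(\<integral>z. F t (restrict z (set t)) * F t' (restrict z (set t')) \<partial>samples {1..n})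
      = (\<integral>z. F t (restrict z (set t)) \<partial>samples {1..n}) * (\<integral>z. F t' (restrict z (set t')) \<partial>samples {1..n})"
    by (rule integral_PiM_mult_disjoint_coords[OF prob_space_P disj _ _ _ F_measurable[OF t]
          F_integrable[OF t] F_measurable[OF t'_tuple] F_integrable[OF t'_tuple]])
  then show ?thesis
    using integral_H_tuple[OF t] integral_H_tuple[OF t'_tuple]
    by (simp add: H_F t t'_tuple power2_eq_square)
qed

lemma integral_eta_hat:
  assumes "n \<ge> 4"
  shows "(\<integral>z. eta_hat k l n z \<partial>samples {1..n}) = eta P k l"
proof -
  have "(\<integral>z. eta_hat k l n z \<partial>samples {1..n})
      = (1 / falling n 4) * (\<Sum>t\<in>tuples n 4. \<integral>z. H_tuple k l z t \<partial>samples {1..n})"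
    unfolding eta_hat_eq using prob_space.integrable_abs_le[OF prob_space_samples H_tuple_measurable abs_H_tuple_le]
    by (simp add: integral_sum)
  also have "\<dots> = (1 / falling n 4) * (\<Sum>t\<in>tuples n 4. eta P k l)"
    by (rule arg_cong[where f = "\<lambda>x. (1 / falling n 4) * x"], rule sum.cong[OF refl integral_H_tuple])
  also have "\<dots> = eta P k l"
    using card_tuples[OF assms] by (simp add: falling_def)
  finally show ?thesis .
qed

lemma integrable_eta_hat_sq: "integrable (samples {1..n}) (\<lambda>z. (eta_hat k l n z)\<^sup>2)"
  unfolding eta_hat_sq_eq
  by (intro integrable_double_sum H_tuple_mul_integrable_bounded(1) H_tuple_measurable abs_H_tuple_le)

lemma integrable_cross_moment_hat: "integrable (samples {1..n}) (cross_moment_hat k l n)"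
  unfolding cross_moment_hat_def
  by (intro integrable_double_sum H_tuple_mul_integrable_bounded(1) H_anchored_measurable abs_H_anchored_le)

lemma integral_eta_hat_sq_ge:
  assumes n: "n \<ge> 4"
  shows "(eta P k l)\<^sup>2 \<le> (\<integral>z. (eta_hat k l n z)\<^sup>2 \<partial>samples {1..n})"
proof -
  interpret prob_space "samples {1..n}"
    by (rule prob_space_samples)
  have "integrable (samples {1..n}) (eta_hat k l n)"
    unfolding eta_hat_eq using integrable_abs_le[OF H_tuple_measurable abs_H_tuple_le] by simp
  then have "variance (eta_hat k l n) = (\<integral>z. (eta_hat k l n z)\<^sup>2 \<partial>samples {1..n}) - (eta P k l)\<^sup>2"
    unfolding integral_eta_hat[OF n, symmetric] using integrable_eta_hat_sq by (rule variance_eq)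
  with variance_positive[of "eta_hat k l n"] show ?thesis
    by linarith
qed

lemma integral_eta_hat_sq_le:
  assumes n: "n \<ge> 4"
  shows "(\<integral>z. (eta_hat k l n z)\<^sup>2 \<partial>samples {1..n}) - (eta P k l)\<^sup>2 \<le> 16 * (8/3 * \<nu>k * \<nu>l)\<^sup>2 / real n"
proof -
  define B where "B = 8/3 * \<nu>k * \<nu>l"
  define f where "f t t' = (\<integral>z. H_tuple k l z t * H_tuple k l z t' \<partial>samples {1..n})" for t t'
  have f_integrable: "integrable (samples {1..n}) (\<lambda>z. H_tuple k l z t * H_tuple k l z t')"
    and f_bound: "\<bar>f t t'\<bar> \<le> B\<^sup>2" if "t \<in> tuples n 4" "t' \<in> tuples n 4" for t t'
    using H_tuple_mul_integrable_bounded[OF that(1) H_tuple_measurable[OF that(2)] abs_H_tuple_le[OF that(2)]]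
    unfolding f_def B_def by blast+
  have "(\<integral>z. (eta_hat k l n z)\<^sup>2 \<partial>samples {1..n})
      = 1 / (real (card (tuples n 4)) * falling n 4) * (\<Sum>t\<in>tuples n 4. \<Sum>t'\<in>tuples n 4. f t t')"
    unfolding eta_hat_sq_eq card_tuples[OF n] f_def by (rule integral_double_sum) (rule f_integrable)
  moreover have "1 / (real (card (tuples n 4)) * falling n 4) * (\<Sum>t\<in>tuples n 4. \<Sum>t'\<in>tuples n 4. f t t')
      - (eta P k l)\<^sup>2 \<le> (1 - (real n - 4) * (real n - 5) * (real n - 6) * (real n - 7) / falling n 4) * B\<^sup>2"
  proof (rule sum_sum_deviation_le[where D = "\<lambda>t. tuples_avoiding n 4 (set t)"])
    fix t assume t: "t \<in> tuples n 4"
    show "f t t' = (eta P k l)\<^sup>2" if "t' \<in> tuples_avoiding n 4 (set t)" for t'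
      unfolding f_def using t that by (rule integral_H_tuple_mul_disjoint)
    show "f t t' - (eta P k l)\<^sup>2 \<le> B\<^sup>2" if "t' \<in> tuples n 4" for t'
      using f_bound[OF t that] zero_le_power2[of "eta P k l"] by linarith
    show "real (card (tuples_avoiding n 4 (set t))) = (real n - 4) * (real n - 5) * (real n - 6) * (real n - 7)"
      using t by (rule card_tuples_avoiding_tuple)
  qed (use n in \<open>auto simp: finite_tuples tuples_nonempty card_tuples falling_pos tuples_avoiding_def\<close>)
  moreover have "\<dots> \<le> (16 / real n) * B\<^sup>2"
    using overlap_fraction_4_le[of "real n"] n by (intro mult_right_mono) (simp_all add: falling_4_eq)
  ultimately show ?thesis
    by (simp add: B_def)
qed

lemma abs_integral_H_mul_H_le:
  "\<bar>\<integral>z. H k l z 1 2 3 4 * H k l z 1 5 6 7 \<partial>samples {1..7}\<bar> \<le> (8/3 * \<nu>k * \<nu>l)\<^sup>2"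
proof -
  have "[1, 2, 3, 4] \<in> tuples 7 4" "[5, 6, 7] \<in> tuples_avoiding 7 3 {[1, 2, 3, 4] ! 0}"
    by (auto simp: tuples_def tuples_avoiding_def)
  from H_tuple_mul_integrable_bounded(2)[OF this(1) H_anchored_measurable[OF this] abs_H_anchored_le[OF this]]
  show ?thesis
    by (simp add: H_tuple_def H_anchored_def)
qed

lemma integral_cross_moment_hat_bias:
  assumes n: "n \<ge> 4"
  shows "\<bar>(\<integral>z. cross_moment_hat k l n z \<partial>samples {1..n})
            - (\<integral>z. H k l z 1 2 3 4 * H k l z 1 5 6 7 \<partial>samples {1..7})\<bar>
         \<le> 18 * (8/3 * \<nu>k * \<nu>l)\<^sup>2 / real n"
proof -
  define B where "B = 8/3 * \<nu>k * \<nu>l"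
  define A where "A = (\<integral>z. H k l z 1 2 3 4 * H k l z 1 5 6 7 \<partial>samples {1..7})"
  define f where "f t s = (\<integral>z. H_tuple k l z t * H_anchored k l z t s \<partial>samples {1..n})" for t s
  have f_integrable: "integrable (samples {1..n}) (\<lambda>z. H_tuple k l z t * H_anchored k l z t s)"
    and f_bound: "\<bar>f t s\<bar> \<le> B\<^sup>2" if "t \<in> tuples n 4" "s \<in> tuples_avoiding n 3 {t ! 0}" for t s
    using H_tuple_mul_integrable_bounded[OF that(1) H_anchored_measurable[OF that] abs_H_anchored_le[OF that]]
    unfolding f_def B_def by blast+
  have "(\<integral>z. cross_moment_hat k l n z \<partial>samples {1..n}) = 1 / (real (card (tuples n 4)) * falling (n - 1) 3)
      * (\<Sum>t\<in>tuples n 4. \<Sum>s\<in>tuples_avoiding n 3 {t ! 0}. f t s)"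
    unfolding cross_moment_hat_def card_tuples[OF n] f_def by (rule integral_double_sum) (rule f_integrable)
  moreover have "\<bar>1 / (real (card (tuples n 4)) * falling (n - 1) 3)
      * (\<Sum>t\<in>tuples n 4. \<Sum>s\<in>tuples_avoiding n 3 {t ! 0}. f t s) - A\<bar>
      \<le> (1 - (real n - 4) * (real n - 5) * (real n - 6) / falling (n - 1) 3) * (2 * B\<^sup>2)"
  proof (rule abs_sum_sum_deviation_le[where D = "\<lambda>t. tuples_avoiding n 3 (set t)"])
    fix t assume t: "t \<in> tuples n 4"
    then have "t ! 0 \<in> set t"
      by (simp add: tuples_def)
    then show "tuples_avoiding n 3 (set t) \<subseteq> tuples_avoiding n 3 {t ! 0}"
      by (auto simp: tuples_avoiding_def)
    show "f t s = A" if "s \<in> tuples_avoiding n 3 (set t)" for s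
      unfolding f_def A_def using t that by (rule integral_H_tuple_mul_H_anchored)
    show "\<bar>f t s - A\<bar> \<le> 2 * B\<^sup>2" if "s \<in> tuples_avoiding n 3 {t ! 0}" for s
      using f_bound[OF t that] abs_integral_H_mul_H_le unfolding A_def B_def by arith
    show "real (card (tuples_avoiding n 3 {t ! 0})) = falling (n - 1) 3"
      unfolding falling_3_eq[OF n] by (rule card_tuples_avoiding_tuple(1)[OF t])
    show "real (card (tuples_avoiding n 3 (set t))) = (real n - 4) * (real n - 5) * (real n - 6)"
      using t by (rule card_tuples_avoiding_tuple)
    show "finite (tuples_avoiding n 3 {t ! 0})"
      by (simp add: tuples_avoiding_def finite_tuples)
  qed (use n in \<open>simp_all add: finite_tuples tuples_nonempty falling_pos\<close>)
  moreover have "\<dots> \<le> (9 / real n) * (2 * B\<^sup>2)"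
    unfolding falling_3_eq[OF n] using overlap_fraction_3_le[of "real n"] n by (intro mult_right_mono) simp_all
  ultimately show ?thesis
    by (simp add: A_def B_def)
qed

lemma integral_sigma2_hat_bias:
  assumes n: "n \<ge> 4"
  shows "\<bar>(\<integral>z. sigma2_hat k l n z \<partial>samples {1..n}) - sigma2 P k l\<bar> \<le> 4608 * \<nu>k\<^sup>2 * \<nu>l\<^sup>2 / real n"
proof -
  define c where "c = (8/3 * \<nu>k * \<nu>l)\<^sup>2 / real n"
  define X1 where "X1 = (\<integral>z. cross_moment_hat k l n z \<partial>samples {1..n})
                        - (\<integral>z. H k l z 1 2 3 4 * H k l z 1 5 6 7 \<partial>samples {1..7})"
  define X2 where "X2 = (\<integral>z. (eta_hat k l n z)\<^sup>2 \<partial>samples {1..n}) - (eta P k l)\<^sup>2"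
  have "(\<integral>z. sigma2_hat k l n z \<partial>samples {1..n}) - sigma2 P k l = 16 * (X1 - X2)"
    unfolding sigma2_hat_eq sigma2_def X1_def X2_def
    using integrable_cross_moment_hat integrable_eta_hat_sq by (simp add: algebra_simps)
  moreover have "\<bar>X1\<bar> \<le> 18 * c" "0 \<le> X2" "X2 \<le> 16 * c"
    using integral_cross_moment_hat_bias[OF n] integral_eta_hat_sq_ge[OF n] integral_eta_hat_sq_le[OF n]
    unfolding X1_def X2_def c_def by simp_all
  ultimately have "\<bar>(\<integral>z. sigma2_hat k l n z \<partial>samples {1..n}) - sigma2 P k l\<bar> \<le> 16 * 34 * c"
    by simp
  also have "16 * 34 * c = 34816 / 9 * (\<nu>k\<^sup>2 * \<nu>l\<^sup>2) / real n"
    using n by (simp add: c_def field_simps power2_eq_square)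
  also have "\<dots> \<le> 4608 * (\<nu>k\<^sup>2 * \<nu>l\<^sup>2) / real n"
    by (intro divide_right_mono mult_right_mono) simp_all
  finally show ?thesis
    by (simp add: mult.assoc)
qed

end

theorem lemma9:
  fixes P :: "('x \<times> 'y) measure" and k :: "'x \<Rightarrow> 'x \<Rightarrow> real" and l :: "'y \<Rightarrow> 'y \<Rightarrow> real"
    and \<nu>k \<nu>l :: real and n :: nat
  assumes "prob_space P"
    and "n \<ge> 4"
    and "pd_kernel k" and "pd_kernel l"
    and "(\<lambda>(a, b). k (fst a) (fst b)) \<in> borel_measurable (P \<Otimes>\<^sub>M P)"
    and "(\<lambda>(a, b). l (snd a) (snd b)) \<in> borel_measurable (P \<Otimes>\<^sub>M P)"
    and "\<forall>x. k x x \<le> \<nu>k" and "\<forall>y. l y y \<le> \<nu>l"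
  shows "\<bar>(\<integral>z. sigma2_hat k l n z \<partial>(PiM {1..n} (\<lambda>_. P))) - sigma2 P k l\<bar>
           \<le> 4608 * \<nu>k\<^sup>2 * \<nu>l\<^sup>2 / real n"
proof -
  interpret hsic_sample P k l \<nu>k \<nu>l
    using assms(1,3-8) by (rule hsic_sample.intro)
  show ?thesis
    using integral_sigma2_hat_bias[OF assms(2)] .
qed

end
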